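(* Let $(S,+)$ be a commutative semigroup and let $A\subseteq S$ be a set of A.P. rich. Fix $l\in\mathbb{N}$ and put \[ B=\{(a,b)\in S\times S:\ \{a,\,a+b,\,a+2b,\dots,\,a+lb\}\subseteq A\}. \] Then $B$ is a set of A.P. rich in the semigroup $S\times S$ (with coordinatewise addition).
   Context: Semigroups are written additively; for $n\in\mathbb{N}$ and $b\in S$, $nb$ denotes $b+b+\dots+b$ ($n$ summands), and $a+0b$ means $a$. An arithmetic progression of length $k$ in a semigroup $T$ is a set $\{a,\,a+b,\,a+2b,\dots,\,a+kb\}$ with $a,b\in T$ (if $T$ has an identity element, $b$ is required not to be the identity). A subset $A$ of a semigroup $T$ is called a set of A.P. rich if it contains arithmetic progressions of arbitrary length, i.e. for every $k\in\mathbb{N}$ there exist $a,b\in T$ with $a+ib\in A$ for all $0\le i\le k$. $S\times S$ is a semigroup under coordinatewise addition. *)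

theory Defs
  imports Main "HOL-Library.Product_Plus"
begin

fun ap_term :: "'a::plus \<Rightarrow> 'a \<Rightarrow> nat \<Rightarrow> 'a" where
  "ap_term a b 0 = a"
| "ap_term a b (Suc i) = ap_term a b i + b"

definition is_identity :: "'a::plus \<Rightarrow> bool" where
  "is_identity e \<longleftrightarrow> (\<forall>x. e + x = x \<and> x + e = x)"

text \<open>A contains arithmetic progressions of arbitrary length; the difference b must not be
  the identity element (automatically satisfied if there is none).\<close>
definition AP_rich :: "'a::plus set \<Rightarrow> bool" where
  "AP_rich A \<longleftrightarrow> (\<forall>k::nat. \<exists>a b. \<not> is_identity b \<and> (\<forall>i\<le>k. ap_term a b i \<in> A))"

end

theory Submission
  imports Defs
begin

text \<open>Take a progression \<open>x, x + y, \<dots>, x + N y\<close> in \<open>A\<close> with \<open>N = k + l (k + 1)\<close>. Then the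
  pairs \<open>(x, y) + j (y, y) = (x + j y, (j + 1) y)\<close> for \<open>j \<le> k\<close> form a progression in \<open>B\<close>:
  the progression \<open>x + j y + i (j + 1) y\<close>, \<open>i \<le> l\<close>, stays inside the original one.\<close>

lemma ap_term_ap_term_same:
  "ap_term (ap_term a b m) b n = ap_term a b (m + n)"
  by (induction n) auto

lemma ap_term_Pair:
  "ap_term (a, b) (c, d) n = (ap_term a c n, ap_term b d n)"
  by (induction n) auto

lemma ap_term_plus_multiple:
  fixes a b :: "'a::semigroup_add"
  shows "ap_term a b m + ap_term b b n = ap_term a b (m + Suc n)"
proof (induction n)
  case 0
  then show ?case by simp
next
  case (Suc n)
  have "ap_term a b m + ap_term b b (Suc n) = (ap_term a b m + ap_term b b n) + b"
    by (simp add: add.assoc)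
  with Suc show ?case by simp
qed

lemma ap_term_multiple_diff:
  fixes a b :: "'a::semigroup_add"
  shows "ap_term a (ap_term b b m) n = ap_term a b (n * Suc m)"
  by (induction n) (simp_all add: ap_term_plus_multiple algebra_simps)

lemma ap_term_sub_progression:
  fixes a b :: "'a::semigroup_add"
  shows "ap_term (ap_term a b m) (ap_term b b m) n = ap_term a b (m + n * Suc m)"
  by (simp add: ap_term_multiple_diff ap_term_ap_term_same)

lemma not_is_identity_Pair:
  "\<not> is_identity b \<Longrightarrow> \<not> is_identity (a, b)"
  by (auto simp: is_identity_def plus_prod_def)

theorem theorem2:
  fixes A :: "'a::ab_semigroup_add set" and l :: nat
  assumes "AP_rich A"
  shows "AP_rich {(a :: 'a, b). \<forall>i\<le>l. ap_term a b i \<in> A}"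
  unfolding AP_rich_def
proof
  fix k :: nat
  obtain x y where y: "\<not> is_identity y" and xy: "\<forall>m\<le>k + l * Suc k. ap_term x y m \<in> A"
    using assms unfolding AP_rich_def by blast
  have "\<forall>i\<le>l. ap_term (ap_term x y j) (ap_term y y j) i \<in> A" if "j \<le> k" for j
  proof (intro allI impI)
    fix i assume "i \<le> l"
    with \<open>j \<le> k\<close> have "j + i * Suc j \<le> k + l * Suc k"
      by (intro add_mono mult_le_mono) auto
    with xy show "ap_term (ap_term x y j) (ap_term y y j) i \<in> A"
      by (simp add: ap_term_sub_progression)
  qed
  then have "\<forall>j\<le>k. ap_term (x, y) (y, y) j \<in> {(a, b). \<forall>i\<le>l. ap_term a b i \<in> A}"
    by (simp add: ap_term_Pair)
  with not_is_identity_Pair[OF y]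
  show "\<exists>a b. \<not> is_identity b \<and> (\<forall>j\<le>k. ap_term a b j \<in> {(a, b). \<forall>i\<le>l. ap_term a b i \<in> A})"
    by blast
qed

end
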